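(* Let $r$ be a prime power and $q=r^2$. If there exist linear codes $C_1$ and $C_2$ over $\mathbb{F}_q$ with parameters $[m,k_1,d_1]_q$ and $[m,k_2,d_2]_q$ such that $C_1\subseteq C_2^{\perp_H}$, then there exists a Hermitian self-orthogonal linear code over $\mathbb{F}_q$ with parameters $[2m,k_1+k_2,d]_q$ where $d\ge\min\{2d_1,d_2\}$.
   Context: For $a\in\mathbb{F}_q$, $\overline{a}:=a^r$. The Hermitian inner product on $\mathbb{F}_q^n$ is $\langle u,v\rangle_H=\sum_i u_i\overline{v_i}$, and $C^{\perp_H}=\{v:\langle u,v\rangle_H=0\ \forall u\in C\}$; $C$ is Hermitian self-orthogonal if $C\subseteq C^{\perp_H}$. A code with parameters $[n,k,d]_q$ is a linear code of length $n$, dimension $k$ and minimum Hamming weight $d$ over $\mathbb{F}_q$. *)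

theory Defs
  imports Complex_Main "HOL-Library.Function_Algebras" "HOL-Computational_Algebra.Primes"
begin

text \<open>Vectors of length n over a field are represented as functions nat => 'a
  vanishing outside {0..<n}; addition/zero are pointwise (Function_Algebras).\<close>

definition vsmult :: "'a::field \<Rightarrow> (nat \<Rightarrow> 'a) \<Rightarrow> (nat \<Rightarrow> 'a)" where
  "vsmult c v = (\<lambda>i. c * v i)"

lemma vector_space_vsmult: "vector_space (vsmult :: 'a::field \<Rightarrow> _)"
  by unfold_locales (auto simp: vsmult_def fun_eq_iff algebra_simps)

definition vecs :: "nat \<Rightarrow> (nat \<Rightarrow> 'a::zero) set" where
  "vecs n = {v. \<forall>i\<ge>n. v i = 0}"

definition hweight :: "nat \<Rightarrow> (nat \<Rightarrow> 'a::zero) \<Rightarrow> nat" where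
  "hweight n v = card {i. i < n \<and> v i \<noteq> 0}"

definition linear_code :: "nat \<Rightarrow> (nat \<Rightarrow> 'a::field) set \<Rightarrow> bool" where
  "linear_code n C \<longleftrightarrow> C \<subseteq> vecs n \<and> module.subspace vsmult C"

definition code_dim :: "(nat \<Rightarrow> 'a::field) set \<Rightarrow> nat" where
  "code_dim C = vector_space.dim vsmult C"

definition min_dist :: "nat \<Rightarrow> (nat \<Rightarrow> 'a::field) set \<Rightarrow> nat" where
  "min_dist n C = Inf (hweight n ` (C - {0}))"

definition is_nkd_code :: "nat \<Rightarrow> nat \<Rightarrow> nat \<Rightarrow> (nat \<Rightarrow> 'a::field) set \<Rightarrow> bool" where
  "is_nkd_code n k d C \<longleftrightarrow> linear_code n C \<and> code_dim C = k \<and> min_dist n C = d"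

text \<open>Hermitian inner product, with conjugation a |-> a^r.\<close>
definition herm_ip :: "nat \<Rightarrow> nat \<Rightarrow> (nat \<Rightarrow> 'a::field) \<Rightarrow> (nat \<Rightarrow> 'a) \<Rightarrow> 'a" where
  "herm_ip r n u v = (\<Sum>i<n. u i * (v i) ^ r)"

definition herm_dual :: "nat \<Rightarrow> nat \<Rightarrow> (nat \<Rightarrow> 'a::field) set \<Rightarrow> (nat \<Rightarrow> 'a) set" where
  "herm_dual r n C = {v \<in> vecs n. \<forall>u\<in>C. herm_ip r n u v = 0}"

definition herm_self_orth :: "nat \<Rightarrow> nat \<Rightarrow> (nat \<Rightarrow> 'a::field) set \<Rightarrow> bool" where
  "herm_self_orth r n C \<longleftrightarrow> C \<subseteq> herm_dual r n C"

definition prime_power :: "nat \<Rightarrow> bool" where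
  "prime_power r \<longleftrightarrow> (\<exists>p e. prime p \<and> e > 0 \<and> r = p ^ e)"

end

theory Submission
  imports Defs "HOL-Algebra.Multiplicative_Group" "HOL-Computational_Algebra.Polynomial"
    "HOL-Library.FuncSet" "HOL-Number_Theory.Residues"
begin

text \<open>Choose \<open>a \<noteq> b\<close> with \<open>a ^ (r + 1) = b ^ (r + 1) = -1\<close>; they exist because the norm
  map \<open>x \<mapsto> x ^ (r + 1)\<close> has fibres of size \<open>r + 1\<close> over its image. The code consists of the
  words \<open>(u + v | a u + b v)\<close> with \<open>u \<in> C\<^sub>1\<close> and \<open>v \<in> C\<^sub>2\<close>. As \<open>x \<mapsto> x ^ r\<close> is additive,
  the Hermitian product of two such words is
  \<open>(1 + a ^ (r + 1)) \<langle>u, u'\<rangle> + (1 + b ^ (r + 1)) \<langle>v, v'\<rangle> + (1 + a b ^ r) \<langle>u, v'\<rangle> + (1 + b a ^ r) \<langle>v, u'\<rangle>\<close>: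
  the first two coefficients vanish by the choice of \<open>a, b\<close> and the last two products because
  \<open>C\<^sub>1\<close> and \<open>C\<^sub>2\<close> are orthogonal (in both orders, the form being conjugate symmetric).
  Since \<open>a \<noteq> b\<close>, the word determines \<open>(u, v)\<close>, giving the dimension, and it has weight at
  least that of \<open>v\<close>; for \<open>v = 0\<close> it is \<open>(u | a u)\<close>, of twice the weight of \<open>u\<close>.\<close>

definition nonzero_mult_group :: "'a::field monoid" where
  "nonzero_mult_group = \<lparr>carrier = - {0}, mult = (*), one = 1\<rparr>"

lemma group_nonzero_mult_group: "group (nonzero_mult_group :: 'a::field monoid)"
proof (rule groupI)
  fix x :: 'a
  assume "x \<in> carrier nonzero_mult_group"
  then show "\<exists>y\<in>carrier nonzero_mult_group. y \<otimes>\<^bsub>nonzero_mult_group\<^esub> x = \<one>\<^bsub>nonzero_mult_group\<^esub>"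
    by (intro bexI[of _ "inverse x"]) (auto simp: nonzero_mult_group_def)
qed (auto simp: nonzero_mult_group_def mult.assoc)

lemma nonzero_mult_group_pow: "x [^]\<^bsub>nonzero_mult_group\<^esub> (n::nat) = (x::'a::field) ^ n"
  by (induction n) (simp_all add: nonzero_mult_group_def)

lemma finite_field_power_card_minus_one:
  fixes x :: "'a::{finite,field}"
  assumes "x \<noteq> 0"
  shows "x ^ (card (UNIV :: 'a set) - 1) = 1"
proof -
  have "Coset.order (nonzero_mult_group :: 'a monoid) = card (UNIV :: 'a set) - 1"
    by (simp add: Coset.order_def nonzero_mult_group_def Compl_eq_Diff_UNIV card_Diff_singleton)
  moreover have "x \<in> carrier nonzero_mult_group"
    using assms by (simp add: nonzero_mult_group_def)
  ultimately show ?thesis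
    using group.pow_order_eq_1[OF group_nonzero_mult_group, of x]
    by (simp add: nonzero_mult_group_pow) (simp add: nonzero_mult_group_def)
qed

lemma finite_field_power_card:
  fixes x :: "'a::{finite,field}"
  shows "x ^ card (UNIV :: 'a set) = x"
proof -
  have "x ^ card (UNIV :: 'a set) = x * x ^ (card (UNIV :: 'a set) - 1)"
    using finite_UNIV_card_ge_0[where 'a='a] by (simp flip: power_Suc)
  then show ?thesis
    using finite_field_power_card_minus_one[of x] by (cases "x = 0") auto
qed

lemma card_UNIV_field_ge_2: "2 \<le> card (UNIV :: 'a::{finite,field} set)"
proof -
  have "card {0, 1 :: 'a} \<le> card (UNIV :: 'a set)"
    by (rule card_mono) auto
  then show ?thesis
    by simp
qed

lemma CHAR_eq_of_card_prime_power:
  assumes "prime p" "k > 0" "card (UNIV :: 'a::{finite,field} set) = p ^ k"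
  shows "CHAR('a) = p"
proof -
  have prime_char: "prime CHAR('a)"
    using prime_CHAR_semidom finite_imp_CHAR_pos[OF finite_UNIV] by blast
  moreover have "CHAR('a) dvd p ^ k"
    using CHAR_dvd_CARD[where 'a='a] assms(3) by simp
  ultimately have "CHAR('a) dvd p"
    using prime_dvd_power by blast
  then show ?thesis
    using prime_char assms(1) primes_dvd_imp_eq by blast
qed

lemma card_power_roots_le:
  fixes c :: "'a::field"
  assumes "n \<ge> 1"
  shows "card {x. x ^ n = c} \<le> n"
proof -
  define P where "P = Polynomial.monom (1::'a) n - [:c:]"
  have "Polynomial.coeff P n = 1"
    using assms by (cases n) (auto simp: P_def)
  then have "P \<noteq> 0"
    by auto
  have "{x. x ^ n = c} = {x. poly P x = 0}"
    by (auto simp: P_def poly_monom)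
  also have "card \<dots> \<le> degree P"
    using card_poly_roots_bound[OF \<open>P \<noteq> 0\<close>] .
  also have "degree P \<le> n"
    unfolding P_def by (rule degree_diff_le) (simp_all add: degree_monom_le)
  finally show ?thesis .
qed

text \<open>The norm map \<open>x \<mapsto> x ^ (r + 1)\<close> sends the \<open>r * r - 1\<close> units into the at most \<open>r - 1\<close>
  roots of \<open>y ^ (r - 1) = 1\<close>, with fibres of size at most \<open>r + 1\<close>; so each fibre over such a
  root has at least \<open>r * r - 1 - (r - 2) * (r + 1) = r + 1\<close> elements.\<close>
lemma card_norm_fibre_ge:
  fixes c :: "'a::{finite,field}"
  assumes card: "card (UNIV :: 'a set) = r * r" and c: "c ^ (r - 1) = 1"
  shows "r + 1 \<le> card {x. x ^ (r + 1) = c}"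
proof -
  have r2: "r \<ge> 2"
  proof (rule ccontr)
    assume "\<not> r \<ge> 2"
    then have "r * r \<le> 1"
      by (cases r) auto
    then show False
      using card_UNIV_field_ge_2[where 'a='a] card by simp
  qed
  define T where "T = {y :: 'a. y ^ (r - 1) = 1}"
  define fibre where "fibre y = {x. x ^ (r + 1) = y}" for y :: 'a
  have card_T: "card T \<le> r - 1"
    unfolding T_def by (rule card_power_roots_le) (use r2 in auto)
  have card_fibre: "card (fibre y) \<le> r + 1" for y
    unfolding fibre_def by (rule card_power_roots_le) simp
  have norm_in_T: "x ^ (r + 1) \<in> T" if "x \<noteq> 0" for x
  proof -
    have "(r + 1) * (r - 1) = card (UNIV :: 'a set) - 1"
      using card r2 by (cases r) (auto simp: algebra_simps)
    then have "(x ^ (r + 1)) ^ (r - 1) = 1"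
      using finite_field_power_card_minus_one[OF that] by (simp only: flip: power_mult)
    then show ?thesis
      by (simp add: T_def)
  qed
  have "c \<in> T"
    using c by (simp add: T_def)
  have units: "UNIV - {0} = (\<Union>y\<in>T. fibre y)"
    using norm_in_T r2 by (auto simp: fibre_def T_def power_0_left)
  have "r * r - 1 = card (UNIV - {0 :: 'a})"
    using card by (simp add: card_Diff_singleton)
  also have "\<dots> = card (\<Union>y\<in>T. fibre y)"
    unfolding units ..
  also have "\<dots> = (\<Sum>y\<in>T. card (fibre y))"
    by (rule card_UN_disjoint) (auto simp: fibre_def)
  also have "\<dots> = card (fibre c) + (\<Sum>y\<in>T - {c}. card (fibre y))"
    using \<open>c \<in> T\<close> by (simp add: sum.remove)
  also have "(\<Sum>y\<in>T - {c}. card (fibre y)) \<le> (card T - 1) * (r + 1)"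
    using sum_mono[of "T - {c}" "\<lambda>y. card (fibre y)" "\<lambda>_. r + 1"] card_fibre \<open>c \<in> T\<close>
    by (simp add: card_Diff_singleton)
  also have "(card T - 1) * (r + 1) \<le> (r - 2) * (r + 1)"
    using card_T by (intro mult_right_mono) auto
  finally have "r * r - 1 \<le> card (fibre c) + (r - 2) * (r + 1)"
    by simp
  moreover have "r * r - 1 = (r - 2) * (r + 1) + (r + 1)"
    using r2 by (cases r; cases "r - 1") (auto simp: algebra_simps)
  ultimately show ?thesis
    by (simp add: fibre_def)
qed

lemma sum_power_additive:
  fixes f :: "'b \<Rightarrow> 'a::comm_ring_1"
  assumes additive: "\<And>x y :: 'a. (x + y) ^ r = x ^ r + y ^ r"
  shows "sum f A ^ r = (\<Sum>i\<in>A. f i ^ r)"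
proof -
  have "(0::'a) ^ r = 0"
    using additive[of 0 0] by simp
  then show ?thesis
    by (induction A rule: infinite_finite_induct) (simp_all add: additive)
qed

lemma herm_ip_swap:
  fixes u v :: "nat \<Rightarrow> 'a::field"
  assumes "\<And>x y :: 'a. (x + y) ^ r = x ^ r + y ^ r" and "\<And>x :: 'a. x ^ (r * r) = x"
  shows "herm_ip r n v u = herm_ip r n u v ^ r"
  unfolding herm_ip_def sum_power_additive[OF assms(1)]
  by (simp add: power_mult_distrib assms(2) mult.commute flip: power_mult)

lemma vecs_finite: "finite (vecs n :: (nat \<Rightarrow> 'a::{finite,zero}) set)"
proof -
  have "vecs n \<subseteq> (\<lambda>g i. if i < n then g i else 0) ` (PiE {..<n} (\<lambda>_. UNIV :: 'a set))"
  proof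
    fix v :: "nat \<Rightarrow> 'a"
    assume "v \<in> vecs n"
    then have "v = (\<lambda>i. if i < n then restrict v {..<n} i else 0)"
      by (auto simp: fun_eq_iff vecs_def)
    then show "v \<in> (\<lambda>g i. if i < n then g i else 0) ` (PiE {..<n} (\<lambda>_. UNIV))"
      by (intro image_eqI[of _ _ "restrict v {..<n}"]) auto
  qed
  then show ?thesis
    by (rule finite_subset) (intro finite_imageI finite_PiE; simp)
qed

lemma card_span_independent:
  fixes B :: "(nat \<Rightarrow> 'a::{finite,field}) set"
  assumes indep: "\<not> module.dependent vsmult B" and fin: "finite B"
  shows "card (module.span vsmult B) = card (UNIV :: 'a set) ^ card B"
proof -
  interpret vector_space "vsmult :: 'a \<Rightarrow> _"
    by (rule vector_space_vsmult)
  define L where "L c = (\<Sum>b\<in>B. vsmult (c b) b)" for c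
  have span_eq: "span B = L ` PiE B (\<lambda>_. UNIV)"
  proof -
    have "L c \<in> L ` PiE B (\<lambda>_. UNIV)" for c
    proof
      show "L c = L (restrict c B)"
        unfolding L_def by (rule sum.cong) auto
    qed simp
    then have "range L = L ` PiE B (\<lambda>_. UNIV)"
      by blast
    then show ?thesis
      unfolding L_def span_finite[OF fin] .
  qed
  have "inj_on L (PiE B (\<lambda>_. UNIV))"
  proof (rule inj_onI)
    fix c c'
    assume c: "c \<in> PiE B (\<lambda>_. UNIV)" and c': "c' \<in> PiE B (\<lambda>_. UNIV)" and "L c = L c'"
    then have "(\<Sum>b\<in>B. vsmult (c b - c' b) b) = 0"
      by (simp add: L_def scale_left_diff_distrib sum_subtractf)
    then have "c b = c' b" if "b \<in> B" for b
      using independentD[OF indep fin subset_refl, of "\<lambda>b. c b - c' b" b] that by simp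
    then show "c = c'"
      using PiE_ext[OF c c'] by blast
  qed
  then have "card (span B) = card (PiE B (\<lambda>_. UNIV :: 'a set))"
    unfolding span_eq by (rule card_image)
  also have "\<dots> = card (UNIV :: 'a set) ^ card B"
    by (simp add: card_PiE[OF fin])
  finally show ?thesis .
qed

lemma card_linear_code:
  fixes C :: "(nat \<Rightarrow> 'a::{finite,field}) set"
  assumes "linear_code n C"
  shows "card C = card (UNIV :: 'a set) ^ code_dim C"
proof -
  interpret vector_space "vsmult :: 'a \<Rightarrow> _"
    by (rule vector_space_vsmult)
  have sub: "subspace C" and "finite C"
    using assms vecs_finite finite_subset unfolding linear_code_def by blast+
  obtain B where B: "B \<subseteq> C" "independent B" "C \<subseteq> span B" "card B = dim C"
    using basis_exists by blast
  then have "C = span B"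
    using span_minimal[OF B(1) sub] by blast
  moreover have "finite B"
    using B(1) \<open>finite C\<close> finite_subset by blast
  ultimately show ?thesis
    using card_span_independent[OF B(2)] B(4) unfolding code_dim_def by simp
qed

lemma linear_code_zero:
  assumes "linear_code n C"
  shows "0 \<in> C"
proof -
  interpret vector_space "vsmult :: 'a \<Rightarrow> _"
    by (rule vector_space_vsmult)
  show ?thesis
    using assms subspace_0 unfolding linear_code_def by blast
qed

lemma min_dist_le_hweight:
  assumes "u \<in> C" "u \<noteq> 0"
  shows "min_dist n C \<le> hweight n u"
  unfolding min_dist_def using assms by (intro cInf_lower) auto

text \<open>\<open>Inf {} :: nat\<close> is \<open>LEAST n. False\<close>, an unspecified number, so the minimum distance
  of a zero code is only known to be the same for all zero codes.\<close>
lemma min_dist_trivial_eq: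
  assumes "C \<subseteq> {0}" "C' \<subseteq> {0}"
  shows "min_dist n C = min_dist n' C'"
proof -
  have empty: "C - {0} = {}" "C' - {0} = {}"
    using assms by blast+
  show ?thesis
    unfolding min_dist_def empty by simp
qed

lemma le_min_dist:
  assumes "\<And>w. w \<in> C \<Longrightarrow> w \<noteq> 0 \<Longrightarrow> d \<le> hweight n w" and "\<not> C \<subseteq> {0}"
  shows "d \<le> min_dist n C"
  unfolding min_dist_def using assms by (intro cInf_greatest) auto

lemma card_Collect_less_add:
  fixes m n :: nat
  shows "card {i. i < m + n \<and> P i} = card {i. i < m \<and> P i} + card {i. i < n \<and> P (m + i)}"
proof (induction n)
  case (Suc n)
  have "{i. i < m + Suc n \<and> P i} = {i. i < m + n \<and> P i} \<union> (if P (m + n) then {m + n} else {})"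
    and "{i. i < Suc n \<and> P (m + i)} = {i. i < n \<and> P (m + i)} \<union> (if P (m + n) then {n} else {})"
    by (auto simp: less_Suc_eq)
  then show ?case
    using Suc.IH by simp
qed simp

lemma sum_lessThan_add:
  fixes f :: "nat \<Rightarrow> 'a::comm_monoid_add"
  shows "(\<Sum>i<m + n. f i) = (\<Sum>i<m. f i) + (\<Sum>i<n. f (m + i))"
  by (induction n) (simp_all add: add.assoc)

definition ab_word :: "nat \<Rightarrow> 'a::field \<Rightarrow> 'a \<Rightarrow> (nat \<Rightarrow> 'a) \<Rightarrow> (nat \<Rightarrow> 'a) \<Rightarrow> nat \<Rightarrow> 'a" where
  "ab_word m a b u v =
     (\<lambda>i. if i < m then u i + v i else if i < 2 * m then a * u (i - m) + b * v (i - m) else 0)"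

definition ab_code ::
    "nat \<Rightarrow> 'a::field \<Rightarrow> 'a \<Rightarrow> (nat \<Rightarrow> 'a) set \<Rightarrow> (nat \<Rightarrow> 'a) set \<Rightarrow> (nat \<Rightarrow> 'a) set" where
  "ab_code m a b C1 C2 = (\<lambda>(u, v). ab_word m a b u v) ` (C1 \<times> C2)"

lemma ab_word_add: "ab_word m a b u v + ab_word m a b u' v' = ab_word m a b (u + u') (v + v')"
  by (auto simp: ab_word_def fun_eq_iff algebra_simps)

lemma ab_word_vsmult: "vsmult c (ab_word m a b u v) = ab_word m a b (vsmult c u) (vsmult c v)"
  by (auto simp: ab_word_def fun_eq_iff algebra_simps vsmult_def)

lemma ab_word_zero: "ab_word m a b 0 0 = 0"
  by (auto simp: ab_word_def fun_eq_iff)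

lemma ab_word_in_vecs: "ab_word m a b u v \<in> vecs (2 * m)"
  by (simp add: vecs_def ab_word_def)

lemma ab_word_inj:
  assumes "a \<noteq> b" "u \<in> vecs m" "v \<in> vecs m" "u' \<in> vecs m" "v' \<in> vecs m"
    and eq: "ab_word m a b u v = ab_word m a b u' v'"
  shows "u = u' \<and> v = v'"
proof -
  have "u i = u' i \<and> v i = v' i" for i
  proof (cases "i < m")
    case True
    have left: "u i + v i = u' i + v' i"
      using fun_cong[OF eq, of i] True by (simp add: ab_word_def)
    have right: "a * u i + b * v i = a * u' i + b * v' i"
      using fun_cong[OF eq, of "i + m"] True by (simp add: ab_word_def)
    have "(b - a) * (v i - v' i) = (a * u i + b * v i) - (a * u' i + b * v' i)
        - a * ((u i + v i) - (u' i + v' i))"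
      by (simp add: algebra_simps)
    then have "v i = v' i"
      using left right assms(1) by simp
    then show ?thesis
      using left by simp
  next
    case False
    then show ?thesis
      using assms(2-5) by (simp add: vecs_def)
  qed
  then show ?thesis
    by (simp add: fun_eq_iff)
qed

lemma hweight_ab_word:
  "hweight (2 * m) (ab_word m a b u v) =
     card {i. i < m \<and> u i + v i \<noteq> 0} + card {i. i < m \<and> a * u i + b * v i \<noteq> 0}"
  unfolding hweight_def mult_2 card_Collect_less_add
  by (simp add: ab_word_def cong: conj_cong)

lemma hweight_le_hweight_ab_word:
  assumes "a \<noteq> b"
  shows "hweight m v \<le> hweight (2 * m) (ab_word m a b u v)"
proof -
  let ?A = "{i. i < m \<and> u i + v i \<noteq> 0}" and ?B = "{i. i < m \<and> a * u i + b * v i \<noteq> 0}"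
  have "{i. i < m \<and> v i \<noteq> 0} \<subseteq> ?A \<union> ?B"
  proof
    fix i
    assume i: "i \<in> {i. i < m \<and> v i \<noteq> 0}"
    have "(b - a) * v i = (a * u i + b * v i) - a * (u i + v i)"
      by (simp add: algebra_simps)
    then show "i \<in> ?A \<union> ?B"
      using i assms by auto
  qed
  then have "hweight m v \<le> card (?A \<union> ?B)"
    unfolding hweight_def by (rule card_mono[rotated]) auto
  also have "\<dots> \<le> card ?A + card ?B"
    by (rule card_Un_le)
  finally show ?thesis
    by (simp add: hweight_ab_word)
qed

lemma hweight_ab_word_zero:
  assumes "a \<noteq> 0"
  shows "hweight (2 * m) (ab_word m a b u 0) = 2 * hweight m u"
  using assms unfolding hweight_ab_word by (simp add: hweight_def)

lemma herm_ip_ab_word: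
  fixes u v u' v' :: "nat \<Rightarrow> 'a::field"
  assumes additive: "\<And>x y :: 'a. (x + y) ^ r = x ^ r + y ^ r"
    and a: "a * a ^ r = -1" and b: "b * b ^ r = -1"
  shows "herm_ip r (2 * m) (ab_word m a b u v) (ab_word m a b u' v') =
     (1 + a * b ^ r) * herm_ip r m u v' + (1 + b * a ^ r) * herm_ip r m v u'"
proof -
  have pointwise: "(x + y) * (x' + y') ^ r + (a * x + b * y) * (a * x' + b * y') ^ r
      = (1 + a * b ^ r) * (x * y' ^ r) + (1 + b * a ^ r) * (y * x' ^ r)" for x y x' y' :: 'a
  proof -
    have "(x + y) * (x' + y') ^ r + (a * x + b * y) * (a * x' + b * y') ^ r
       = x * x' ^ r * (1 + a * a ^ r) + y * y' ^ r * (1 + b * b ^ r)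
         + (1 + a * b ^ r) * (x * y' ^ r) + (1 + b * a ^ r) * (y * x' ^ r)"
      by (simp add: additive power_mult_distrib algebra_simps)
    then show ?thesis
      using a b by simp
  qed
  have "herm_ip r (2 * m) (ab_word m a b u v) (ab_word m a b u' v') =
     (\<Sum>i<m. (u i + v i) * (u' i + v' i) ^ r + (a * u i + b * v i) * (a * u' i + b * v' i) ^ r)"
    unfolding herm_ip_def mult_2 sum_lessThan_add by (simp add: ab_word_def sum.distrib)
  also have "\<dots> = (1 + a * b ^ r) * herm_ip r m u v' + (1 + b * a ^ r) * herm_ip r m v u'"
    by (simp add: pointwise herm_ip_def sum.distrib sum_distrib_left)
  finally show ?thesis .
qed

lemma ab_code_memE:
  assumes "w \<in> ab_code m a b C1 C2"
  obtains u v where "u \<in> C1" "v \<in> C2" "w = ab_word m a b u v"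
  using assms unfolding ab_code_def by auto

lemma ab_word_in_ab_code: "u \<in> C1 \<Longrightarrow> v \<in> C2 \<Longrightarrow> ab_word m a b u v \<in> ab_code m a b C1 C2"
  unfolding ab_code_def by auto

lemma linear_code_ab_code:
  assumes "linear_code m C1" "linear_code m C2"
  shows "linear_code (2 * m) (ab_code m a b C1 C2)"
proof -
  interpret vector_space "vsmult :: 'a \<Rightarrow> _"
    by (rule vector_space_vsmult)
  have sub1: "subspace C1" and sub2: "subspace C2"
    using assms unfolding linear_code_def by blast+
  have "subspace (ab_code m a b C1 C2)"
    unfolding subspace_def
  proof (intro conjI ballI allI)
    show "0 \<in> ab_code m a b C1 C2"
      using ab_word_in_ab_code[OF subspace_0[OF sub1] subspace_0[OF sub2]] by (simp add: ab_word_zero)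
  next
    fix x y
    assume "x \<in> ab_code m a b C1 C2" "y \<in> ab_code m a b C1 C2"
    then show "x + y \<in> ab_code m a b C1 C2"
      by (elim ab_code_memE) (simp add: ab_word_add ab_word_in_ab_code subspace_add sub1 sub2)
  next
    fix c x
    assume "x \<in> ab_code m a b C1 C2"
    then show "vsmult c x \<in> ab_code m a b C1 C2"
      by (elim ab_code_memE) (simp add: ab_word_vsmult ab_word_in_ab_code subspace_scale sub1 sub2)
  qed
  moreover have "ab_code m a b C1 C2 \<subseteq> vecs (2 * m)"
    by (auto simp: ab_code_def ab_word_in_vecs)
  ultimately show ?thesis
    unfolding linear_code_def by blast
qed

lemma code_dim_ab_code:
  fixes C1 C2 :: "(nat \<Rightarrow> 'a::{finite,field}) set"
  assumes "a \<noteq> b" and C1: "linear_code m C1" and C2: "linear_code m C2"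
  shows "code_dim (ab_code m a b C1 C2) = code_dim C1 + code_dim C2"
proof -
  have "inj_on (\<lambda>(u, v). ab_word m a b u v) (C1 \<times> C2)"
  proof (rule inj_onI, clarify)
    fix u v u' v'
    assume "u \<in> C1" "v \<in> C2" "u' \<in> C1" "v' \<in> C2" "ab_word m a b u v = ab_word m a b u' v'"
    then show "u = u' \<and> v = v'"
      using ab_word_inj[OF \<open>a \<noteq> b\<close>] C1 C2 unfolding linear_code_def by blast
  qed
  then have "card (ab_code m a b C1 C2) = card C1 * card C2"
    by (simp add: ab_code_def card_image card_cartesian_product)
  then have "card (UNIV :: 'a set) ^ code_dim (ab_code m a b C1 C2)
      = card (UNIV :: 'a set) ^ (code_dim C1 + code_dim C2)"
    using card_linear_code[OF linear_code_ab_code[OF C1 C2]] card_linear_code[OF C1]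
      card_linear_code[OF C2] by (simp add: power_add)
  then show ?thesis
    using card_UNIV_field_ge_2[where 'a='a] power_inject_exp by simp
qed

lemma min_dist_ab_code:
  assumes "a \<noteq> b" "a \<noteq> 0" and C1: "linear_code m C1" and C2: "linear_code m C2"
  shows "min (2 * min_dist m C1) (min_dist m C2) \<le> min_dist (2 * m) (ab_code m a b C1 C2)"
proof (cases "ab_code m a b C1 C2 \<subseteq> {0}")
  case True
  have "v = 0" if "v \<in> C2" for v
  proof -
    have "0 \<in> C1" "v \<in> vecs m" "0 \<in> vecs m"
      using linear_code_zero[OF C1] C2 that unfolding linear_code_def by (auto simp: vecs_def)
    then have "ab_word m a b 0 v \<in> ab_code m a b C1 C2"
      using ab_word_in_ab_code that by blast
    then have "ab_word m a b 0 v = ab_word m a b 0 0"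
      using True by (auto simp: ab_word_zero)
    then show "v = 0"
      using ab_word_inj[OF \<open>a \<noteq> b\<close>] \<open>v \<in> vecs m\<close> \<open>0 \<in> vecs m\<close> by blast
  qed
  then have "min_dist m C2 = min_dist (2 * m) (ab_code m a b C1 C2)"
    using min_dist_trivial_eq[OF _ True] by blast
  then show ?thesis
    by simp
next
  case False
  show ?thesis
  proof (rule le_min_dist[OF _ False])
    fix w
    assume "w \<in> ab_code m a b C1 C2" "w \<noteq> 0"
    then obtain u v where uv: "u \<in> C1" "v \<in> C2" "w = ab_word m a b u v"
      by (elim ab_code_memE)
    show "min (2 * min_dist m C1) (min_dist m C2) \<le> hweight (2 * m) w"
    proof (cases "v = 0")
      case True
      then have "u \<noteq> 0"
        using \<open>w \<noteq> 0\<close> uv(3) by (auto simp: ab_word_zero)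
      then have "min_dist m C1 \<le> hweight m u"
        by (rule min_dist_le_hweight[OF uv(1)])
      moreover have "hweight (2 * m) w = 2 * hweight m u"
        using hweight_ab_word_zero[OF \<open>a \<noteq> 0\<close>] uv(3) True by simp
      ultimately show ?thesis
        by (simp add: min_le_iff_disj)
    next
      case False
      then show ?thesis
        using min_dist_le_hweight[OF uv(2)] hweight_le_hweight_ab_word[OF \<open>a \<noteq> b\<close>] uv(3)
        by (meson le_trans min.cobounded2)
    qed
  qed
qed

lemma herm_self_orth_ab_code:
  fixes a b :: "'a::field"
  assumes "\<And>x y :: 'a. (x + y) ^ r = x ^ r + y ^ r"
    and "a * a ^ r = -1" "b * b ^ r = -1"
    and orth: "\<And>u v. u \<in> C1 \<Longrightarrow> v \<in> C2 \<Longrightarrow> herm_ip r m u v = 0 \<and> herm_ip r m v u = 0"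
  shows "herm_self_orth r (2 * m) (ab_code m a b C1 C2)"
  unfolding herm_self_orth_def herm_dual_def
proof (intro subsetI CollectI conjI ballI)
  fix w' w
  assume "w' \<in> ab_code m a b C1 C2" "w \<in> ab_code m a b C1 C2"
  then show "w' \<in> vecs (2 * m)" "herm_ip r (2 * m) w w' = 0"
    using herm_ip_ab_word[OF assms(1-3)] orth ab_word_in_vecs
    by (auto elim!: ab_code_memE)
qed

lemma frobenius_additive:
  fixes x y :: "'a::{finite,field}"
  assumes "prime_power r" and "card (UNIV :: 'a set) = r * r"
  shows "(x + y) ^ r = x ^ r + y ^ r"
proof -
  obtain p e where pe: "prime p" "e > 0" "r = p ^ e"
    using assms(1) unfolding prime_power_def by blast
  have "card (UNIV :: 'a set) = p ^ (e * 2)"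
    using assms(2) pe(3) by (simp add: power_mult power2_eq_square)
  then have "CHAR('a) = p"
    using CHAR_eq_of_card_prime_power[OF pe(1), of "e * 2"] pe(2) by simp
  then show ?thesis
    using freshmans_dream' pe by blast
qed

lemma herm_ip_eq_0_swap:
  fixes u v :: "nat \<Rightarrow> 'a::{finite,field}"
  assumes "prime_power r" and card: "card (UNIV :: 'a set) = r * r"
    and "herm_ip r n u v = 0"
  shows "herm_ip r n v u = 0"
proof -
  have "x ^ (r * r) = x" for x :: 'a
    using finite_field_power_card[of x] card by simp
  then have "herm_ip r n v u = herm_ip r n u v ^ r"
    by (rule herm_ip_swap[OF frobenius_additive[OF assms(1,2)]])
  moreover have "r > 0"
    using assms(1) prime_gt_0_nat unfolding prime_power_def by auto
  ultimately show ?thesis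
    using assms(3) by simp
qed

lemma exists_two_norm_minus_one:
  assumes "prime_power r" and card: "card (UNIV :: 'a set) = r * r"
  obtains a b :: "'a::{finite,field}" where "a \<noteq> b" "a * a ^ r = -1" "b * b ^ r = -1"
proof -
  have "r > 0"
    using assms(1) prime_gt_0_nat unfolding prime_power_def by auto
  then have "(-1 :: 'a) ^ r = -1"
    using frobenius_additive[OF assms, of 1 "-1"] by (simp add: power_0_left add_eq_0_iff)
  then have "(-1 :: 'a) ^ (r - 1) = 1"
    using \<open>r > 0\<close> by (cases r) auto
  then have "2 \<le> card {x :: 'a. x ^ (r + 1) = -1}"
    using card_norm_fibre_ge[OF card] \<open>r > 0\<close> by fastforce
  then show ?thesis
    using that by (auto simp: card_le_Suc_iff numeral_2_eq_2)
qed

theorem corollary4p3: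
  fixes C1 C2 :: "(nat \<Rightarrow> 'a::{finite,field}) set"
    and r m k1 k2 d1 d2 :: nat
  assumes "prime_power r"
    and "card (UNIV :: 'a set) = r ^ 2"
    and "is_nkd_code m k1 d1 C1"
    and "is_nkd_code m k2 d2 C2"
    and "C1 \<subseteq> herm_dual r m C2"
  shows "\<exists>(C :: (nat \<Rightarrow> 'a) set) d. is_nkd_code (2 * m) (k1 + k2) d C
           \<and> herm_self_orth r (2 * m) C \<and> d \<ge> min (2 * d1) d2"
proof -
  have card: "card (UNIV :: 'a set) = r * r"
    using assms(2) by (simp add: power2_eq_square)
  obtain a b :: 'a where "a \<noteq> b" and a: "a * a ^ r = -1" and b: "b * b ^ r = -1"
    using exists_two_norm_minus_one[OF assms(1) card] .
  then have "a \<noteq> 0"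
    by auto
  have orth: "herm_ip r m u v = 0 \<and> herm_ip r m v u = 0" if "u \<in> C1" "v \<in> C2" for u v
  proof -
    have "herm_ip r m v u = 0"
      using assms(5) that unfolding herm_dual_def by auto
    then show ?thesis
      using herm_ip_eq_0_swap[OF assms(1) card] by blast
  qed
  have C1: "linear_code m C1" and C2: "linear_code m C2"
    using assms(3,4) unfolding is_nkd_code_def by blast+
  show ?thesis
    using linear_code_ab_code[OF C1 C2] code_dim_ab_code[OF \<open>a \<noteq> b\<close> C1 C2]
      min_dist_ab_code[OF \<open>a \<noteq> b\<close> \<open>a \<noteq> 0\<close> C1 C2]
      herm_self_orth_ab_code[OF frobenius_additive[OF assms(1) card] a b orth]
      assms(3,4) unfolding is_nkd_code_def by blast
qed

end
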